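(* Fix a class $k$, data points with empirical mean $\hat{\boldsymbol\mu}_k$ and empirical covariance $\mathbf\Sigma_k$ (positive semidefinite), and $\gamma\ge0$ with $\gamma\hat{\boldsymbol\mu}_k\neq\mathbf 0$ or $\mathbf\Sigma_k$ full rank. Put $c=\frac{\gamma^2}{1+\gamma^2}\|\hat{\boldsymbol\mu}_k\|_2^2$ and $\mathbf M_\tau=\sigma_\tau^2\mathbf I+r_\tau^2(\mathbf\Sigma_k+c\mathbf I)$. For $T>0$ let $\mathbf z^c_t$, $t\in[0,T]$, solve $$\frac{d\mathbf z^c_t}{dt}=\mathbf z^c_t-\mathbf M_{T-t}^{-1}\mathbf z^c_t+\frac{r_{T-t}}{1+\gamma^2}\mathbf M_{T-t}^{-1}\hat{\boldsymbol\mu}_k,\qquad \mathbf z^c_0\sim\mathcal N(\mathbf 0,\mathbf I_d).$$ Then $\mathbf z^c_T$ is Gaussian and, as $T\to\infty$, its distribution converges to $$\mathcal N\Big(\frac{\hat{\boldsymbol\mu}_k}{1+\gamma^2},\ \mathbf\Sigma_k+\frac{\gamma^2}{1+\gamma^2}\|\hat{\boldsymbol\mu}_k\|_2^2\mathbf I\Big).$$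
   Context: Setup: for a fixed class $k$ the training data of class $k$ are $\mathbf x_1,\dots,\mathbf x_{n_k}\in\mathbb R^d$; the empirical mean is $\hat{\boldsymbol\mu}_k=\frac1{n_k}\sum_{i=1}^{n_k}\mathbf x_i$ and the empirical covariance is $\mathbf\Sigma_k=\frac1{n_k}\sum_{i=1}^{n_k}\mathbf x_i\mathbf x_i^\top-\hat{\boldsymbol\mu}_k\hat{\boldsymbol\mu}_k^\top$. For $t\ge0$ put $r_t=e^{-t}$ and $\sigma_t=\sqrt{1-e^{-2t}}$. $\gamma\ge0$ is the corruption control parameter. The ODE above is the deterministic reverse process $d\mathbf z_t=(\mathbf z_t+\hat s^c(\mathbf z_t,T-t))dt$ in forward time, with the score estimate $\hat s^c(\mathbf z,\tau)=-\mathbf M_\tau^{-1}\mathbf z+\frac{r_\tau}{1+\gamma^2}\mathbf M_\tau^{-1}\hat{\boldsymbol\mu}_k$ obtained from training with corrupted condition embeddings. *)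

theory Defs
  imports "HOL-Probability.Probability"
begin

definition outer :: "real^'n \<Rightarrow> real^'n \<Rightarrow> real^'n^'n" where
  "outer x y = (\<chi> i j. x $ i * y $ j)"

definition emp_mean :: "nat \<Rightarrow> (nat \<Rightarrow> real^'n) \<Rightarrow> real^'n" where
  "emp_mean n xs = (1 / real n) *\<^sub>R (\<Sum>i<n. xs i)"

definition emp_cov :: "nat \<Rightarrow> (nat \<Rightarrow> real^'n) \<Rightarrow> real^'n^'n" where
  "emp_cov n xs = (1 / real n) *\<^sub>R (\<Sum>i<n. outer (xs i) (xs i))
                   - outer (emp_mean n xs) (emp_mean n xs)"

definition r_sched :: "real \<Rightarrow> real" where
  "r_sched t = exp (- t)"

definition sigma_sched :: "real \<Rightarrow> real" where
  "sigma_sched t = sqrt (1 - exp (- 2 * t))"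

text \<open>Gaussian measure on R^n with mean m and covariance S, defined through its
  characteristic function (this also covers degenerate covariances).\<close>
definition is_gaussian :: "(real^'n) measure \<Rightarrow> real^'n \<Rightarrow> real^'n^'n \<Rightarrow> bool" where
  "is_gaussian N m S \<longleftrightarrow> prob_space N \<and> sets N = sets borel \<and>
     (\<forall>u. (CLINT x|N. cis (u \<bullet> x)) = cis (u \<bullet> m) * complex_of_real (exp (- (u \<bullet> (S *v u)) / 2)))"

definition gaussian :: "(real^'n) measure \<Rightarrow> bool" where
  "gaussian N \<longleftrightarrow> (\<exists>m S. is_gaussian N m S)"

definition weak_conv_at_top :: "(real \<Rightarrow> (real^'n) measure) \<Rightarrow> (real^'n) measure \<Rightarrow> bool" where
  "weak_conv_at_top F G \<longleftrightarrow>
     (\<forall>f :: real^'n \<Rightarrow> real. continuous_on UNIV f \<and> bounded (range f) \<longrightarrow>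
        ((\<lambda>T. integral\<^sup>L (F T) f) \<longlongrightarrow> integral\<^sup>L G f) at_top)"

end

theory Submission
  imports Defs "HOL-Real_Asymp.Real_Asymp"
begin

text \<open>
  With \<open>S = \<Sigma> + c I\<close> and \<open>m = \<mu> / (1 + \<gamma>^2)\<close> the drift of the ODE is
  \<open>z - M_\<tau>^-1 (z - r_\<tau> m)\<close>, \<open>M_\<tau> = \<sigma>_\<tau>^2 I + r_\<tau>^2 S\<close>: the probability-flow ODE of the
  Gaussian target \<open>N(m, S)\<close>, and the nondegeneracy hypothesis makes \<open>S\<close> positive definite.
  In an orthonormal eigenbasis of \<open>S\<close>, with eigenvalues \<open>\<lambda>_b > 0\<close>, every \<open>M_\<tau>\<close> is diagonal
  with entries \<open>V_b(\<tau>) = \<sigma>_\<tau>^2 + r_\<tau>^2 \<lambda>_b\<close>, so the ODE decouples, and along each eigenvector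
  \<open>(w_t - r_(T-t) m_b) / sqrt (V_b(T - t))\<close> is a first integral. Hence
  \<open>z_T = G_T (z_0 - e^-T m) + m\<close> with \<open>G_T\<close> diagonal with entries \<open>sqrt (\<lambda>_b / V_b(T))\<close>, an affine
  image of the standard Gaussian \<open>z_0\<close>. As \<open>T \<rightarrow> \<infinity>\<close>, \<open>G_T \<rightarrow> S^(1/2)\<close>, so
  \<open>z_T \<rightarrow> S^(1/2) z_0 + m\<close> pointwise on the sample space, and dominated convergence gives weak
  convergence to \<open>N(m, S)\<close>.
\<close>

section \<open>Spectral decomposition of symmetric matrices\<close>

lemma zero_if_linear_le_quadratic:
  fixes \<beta> K :: real
  assumes "\<And>t. 2 * t * \<beta> \<le> t\<^sup>2 * K"
  shows "\<beta> = 0"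
proof (rule ccontr)
  assume "\<beta> \<noteq> 0"
  then have sq: "\<beta>\<^sup>2 > 0" by simp
  define s where "s = 1 / (\<bar>K\<bar> + 1)"
  have s: "s > 0" "s * K < 2" unfolding s_def
    by (auto simp: field_simps abs_if split: if_splits)
  have "2 * (s * \<beta>) * \<beta> \<le> (s * \<beta>)\<^sup>2 * K" by (rule assms)
  then have "(2 * s) * \<beta>\<^sup>2 \<le> (s * s * K) * \<beta>\<^sup>2" by (simp add: power2_eq_square algebra_simps)
  with sq have "2 * s \<le> s * s * K" by (metis mult_le_cancel_right_pos)
  with s show False by (simp add: mult.assoc)
qed

lemma psd_quadratic_form_zero_imp_zero:
  fixes A :: "real^'n^'n"
  assumes sym: "\<And>x y. (A *v x) \<bullet> y = x \<bullet> (A *v y)"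
    and psd: "\<And>y. y \<bullet> (A *v y) \<ge> 0"
    and "x \<bullet> (A *v x) = 0"
  shows "A *v x = 0"
proof -
  have "- ((A *v x) \<bullet> (A *v x)) = 0"
  proof (rule zero_if_linear_le_quadratic)
    fix t :: real
    have "0 \<le> (x + t *\<^sub>R (A *v x)) \<bullet> (A *v (x + t *\<^sub>R (A *v x)))" by (rule psd)
    then show "2 * t * - ((A *v x) \<bullet> (A *v x)) \<le> t\<^sup>2 * ((A *v x) \<bullet> (A *v (A *v x)))"
      using assms(3) sym[of x "A *v x"]
      by (simp add: matrix_vector_right_distrib matrix_vector_mult_scaleR inner_add_left
          inner_add_right inner_commute power2_eq_square algebra_simps)
  qed
  then show ?thesis by simp
qed

lemma rayleigh_maximizer_eigenvector:
  fixes A :: "real^'n^'n"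
  assumes sym: "\<And>x y. (A *v x) \<bullet> y = x \<bullet> (A *v y)"
    and S: "subspace S" and invariant: "\<And>y. y \<in> S \<Longrightarrow> A *v y \<in> S"
    and x0: "x0 \<in> S" "x0 \<bullet> x0 = 1"
    and max: "\<And>y. y \<in> S \<Longrightarrow> y \<bullet> (A *v y) \<le> (x0 \<bullet> (A *v x0)) * (y \<bullet> y)"
  shows "A *v x0 = (x0 \<bullet> (A *v x0)) *\<^sub>R x0"
proof -
  define q where "q = x0 \<bullet> (A *v x0)"
  have orth: "v \<bullet> (A *v x0) = 0" if v: "v \<in> S" "x0 \<bullet> v = 0" for v
  proof (rule zero_if_linear_le_quadratic)
    fix t :: real
    have "x0 + t *\<^sub>R v \<in> S" using S x0 v by (simp add: subspace_add subspace_mul)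
    from max[OF this] have "(x0 + t *\<^sub>R v) \<bullet> (A *v (x0 + t *\<^sub>R v))
        \<le> q * ((x0 + t *\<^sub>R v) \<bullet> (x0 + t *\<^sub>R v))" unfolding q_def .
    then show "2 * t * (v \<bullet> (A *v x0)) \<le> t\<^sup>2 * (q * (v \<bullet> v) - v \<bullet> (A *v v))"
      using sym[of x0 v] x0 v unfolding q_def
      by (simp add: matrix_vector_right_distrib matrix_vector_mult_scaleR inner_add_left
          inner_add_right inner_commute power2_eq_square algebra_simps)
  qed
  define w where "w = A *v x0 - q *\<^sub>R x0"
  have "w \<in> S" unfolding w_def using S invariant x0 by (simp add: subspace_diff subspace_mul)
  moreover have wx0: "x0 \<bullet> w = 0" unfolding w_def q_def using x0 by (simp add: inner_diff_right)
  ultimately have "w \<bullet> (A *v x0) = 0" by (rule orth)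
  then have "w \<bullet> w = 0" using wx0 unfolding w_def by (simp add: inner_diff_right inner_commute)
  then show ?thesis unfolding w_def q_def by simp
qed

definition orthonormal_eigenvectors :: "real^'n^'n \<Rightarrow> (real^'n) set \<Rightarrow> bool" where
  "orthonormal_eigenvectors A B \<longleftrightarrow> finite B \<and> (\<forall>b\<in>B. b \<bullet> b = 1) \<and> pairwise orthogonal B
     \<and> (\<forall>b\<in>B. A *v b = (b \<bullet> (A *v b)) *\<^sub>R b)"

lemma orthonormal_eigenvectors_extend:
  fixes A :: "real^'n^'n"
  assumes sym: "\<And>x y. (A *v x) \<bullet> y = x \<bullet> (A *v y)"
    and B: "orthonormal_eigenvectors A B" and card: "card B < CARD('n)"
  obtains x where "x \<bullet> x = 1" "\<And>b. b \<in> B \<Longrightarrow> orthogonal b x" "A *v x = (x \<bullet> (A *v x)) *\<^sub>R x"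
proof -
  define S where "S = {y. \<forall>b\<in>B. orthogonal b y}"
  have S: "subspace S" unfolding S_def by (rule subspace_orthogonal_to_vectors)
  have invariant: "A *v y \<in> S" if y: "y \<in> S" for y
  proof -
    have "b \<bullet> (A *v y) = 0" if b: "b \<in> B" for b
    proof -
      have "b \<bullet> (A *v y) = (A *v b) \<bullet> y" by (simp add: sym)
      also have "\<dots> = (b \<bullet> (A *v b)) * (b \<bullet> y)"
        using B b unfolding orthonormal_eigenvectors_def by (metis inner_scaleR_left)
      finally show ?thesis using y b unfolding S_def orthogonal_def by simp
    qed
    then show ?thesis unfolding S_def orthogonal_def by simp
  qed
  have "dim B < DIM(real^'n)"
    using B card dim_le_card[of B B] span_superset unfolding orthonormal_eigenvectors_def by fastforce
  then obtain y where y: "y \<noteq> 0" "\<And>x. x \<in> span B \<Longrightarrow> orthogonal y x"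
    using orthogonal_to_subspace_exists by blast
  have "y /\<^sub>R norm y \<in> S \<inter> sphere 0 1"
    using y span_base unfolding S_def by (auto simp: orthogonal_commute orthogonal_scaleR)
  moreover have "compact (S \<inter> sphere 0 1)"
    using S by (intro closed_Int_compact compact_sphere closed_subspace)
  moreover have "continuous_on (S \<inter> sphere 0 1) (\<lambda>y. y \<bullet> (A *v y))"
    by (intro continuous_intros continuous_on_compose2[OF matrix_vector_mult_linear_continuous_on]) auto
  ultimately obtain x0 where x0: "x0 \<in> S \<inter> sphere 0 1"
    and max_sphere: "\<And>y. y \<in> S \<inter> sphere 0 1 \<Longrightarrow> y \<bullet> (A *v y) \<le> x0 \<bullet> (A *v x0)"
    using continuous_attains_sup[of "S \<inter> sphere 0 1"] by blast
  have max: "y \<bullet> (A *v y) \<le> (x0 \<bullet> (A *v x0)) * (y \<bullet> y)" if "y \<in> S" for y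
  proof (cases "y = 0")
    case False
    then have "y /\<^sub>R norm y \<in> S \<inter> sphere 0 1" using S \<open>y \<in> S\<close> by (simp add: subspace_mul)
    from max_sphere[OF this] have "(y \<bullet> (A *v y)) / (norm y)\<^sup>2 \<le> x0 \<bullet> (A *v x0)"
      by (simp add: matrix_vector_mult_scaleR power2_eq_square divide_inverse mult_ac)
    with False show ?thesis by (simp add: divide_le_eq power2_norm_eq_inner)
  qed simp
  have "x0 \<in> S" "x0 \<bullet> x0 = 1" using x0 by (auto simp: norm_eq_1)
  from rayleigh_maximizer_eigenvector[OF sym S invariant this max] this(2) that \<open>x0 \<in> S\<close>
  show ?thesis unfolding S_def by blast
qed

lemma orthonormal_eigenvectors_exist:
  fixes A :: "real^'n^'n"
  assumes sym: "\<And>x y. (A *v x) \<bullet> y = x \<bullet> (A *v y)"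
  shows "k \<le> CARD('n) \<Longrightarrow> \<exists>B. orthonormal_eigenvectors A B \<and> card B = k"
proof (induction k)
  case 0
  show ?case by (rule exI[of _ "{}"]) (simp add: orthonormal_eigenvectors_def)
next
  case (Suc k)
  then obtain B where B: "orthonormal_eigenvectors A B" "card B = k" by auto
  moreover have "card B < CARD('n)" using Suc.prems B(2) by simp
  ultimately obtain x where x: "x \<bullet> x = 1" "\<And>b. b \<in> B \<Longrightarrow> orthogonal b x"
    "A *v x = (x \<bullet> (A *v x)) *\<^sub>R x"
    using orthonormal_eigenvectors_extend[OF sym] by blast
  have "x \<notin> B" using x(1,2) by (force simp: orthogonal_def)
  then have "card (insert x B) = Suc k" using B unfolding orthonormal_eigenvectors_def by auto
  moreover have "orthonormal_eigenvectors A (insert x B)"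
    using B x unfolding orthonormal_eigenvectors_def
    by (auto simp: pairwise_insert orthogonal_commute)
  ultimately show ?case by blast
qed

definition diag_op :: "(real^'n) set \<Rightarrow> (real^'n \<Rightarrow> real) \<Rightarrow> real^'n \<Rightarrow> real^'n" where
  "diag_op B g x = (\<Sum>b\<in>B. (g b * (b \<bullet> x)) *\<^sub>R b)"

locale orthonormal_basis =
  fixes B :: "(real^'n) set"
  assumes finite: "finite B" and unit: "\<And>b. b \<in> B \<Longrightarrow> b \<bullet> b = 1"
    and orthogonal: "pairwise orthogonal B" and card: "card B = CARD('n)"
begin

lemma inner_basis: "b \<in> B \<Longrightarrow> b' \<in> B \<Longrightarrow> b \<bullet> b' = (if b = b' then 1 else 0)"
  using unit orthogonal by (auto simp: pairwise_def orthogonal_def)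

lemma span_eq_UNIV: "span B = UNIV"
proof -
  have "independent B"
    using orthogonal unit by (intro pairwise_orthogonal_independent) force+
  then show ?thesis using card_eq_dim[of B UNIV] card finite by (auto simp: dim_UNIV)
qed

lemma basis_eqI: assumes "\<And>b. b \<in> B \<Longrightarrow> b \<bullet> x = b \<bullet> y" shows "x = y"
proof -
  have "orthogonal (x - y) (x - y)"
    by (rule orthogonal_to_span)
      (use assms span_eq_UNIV in
        \<open>auto simp: orthogonal_def inner_diff_left inner_diff_right inner_commute\<close>)
  then show ?thesis by (simp add: orthogonal_def)
qed

lemma inner_diag_op_basis: "b \<in> B \<Longrightarrow> b \<bullet> diag_op B g x = g b * (b \<bullet> x)"
  using finite by (simp add: diag_op_def inner_sum_right inner_basis if_distrib cong: if_cong)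

lemma diag_op_diag_op: "diag_op B g (diag_op B h x) = diag_op B (\<lambda>b. g b * h b) x"
  by (rule basis_eqI) (simp add: inner_diag_op_basis)

lemma diag_op_self_adjoint: "diag_op B g x \<bullet> y = x \<bullet> diag_op B g y"
  by (simp add: diag_op_def inner_sum_left inner_sum_right inner_commute mult_ac)

lemma matrix_inv_diag_op:
  fixes M :: "real^'n^'n"
  assumes M: "\<And>x. M *v x = diag_op B g x" and nonzero: "\<And>b. b \<in> B \<Longrightarrow> g b \<noteq> 0"
  shows "matrix_inv M *v y = diag_op B (\<lambda>b. 1 / g b) y"
proof -
  have "x = 0" if "M *v x = 0" for x
  proof (rule basis_eqI)
    fix b assume b: "b \<in> B"
    have "g b * (b \<bullet> x) = 0" using that M[of x] inner_diag_op_basis[OF b, of g x] by simp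
    then show "b \<bullet> x = b \<bullet> 0" using nonzero[OF b] by simp
  qed
  then have "invertible M" using matrix_left_invertible_ker invertible_left_inverse by blast
  then have "M ** matrix_inv M = mat 1" unfolding matrix_inv_def invertible_def by (rule someI2_ex) blast
  then have M_inv: "M *v (matrix_inv M *v y) = y" by (metis matrix_vector_mul_assoc matrix_vector_mul_lid)
  show ?thesis
  proof (rule basis_eqI)
    fix b assume b: "b \<in> B"
    have "b \<bullet> y = g b * (b \<bullet> (matrix_inv M *v y))" by (metis M M_inv b inner_diag_op_basis)
    then show "b \<bullet> (matrix_inv M *v y) = b \<bullet> diag_op B (\<lambda>b. 1 / g b) y"
      using nonzero[OF b] by (simp add: inner_diag_op_basis b field_simps)
  qed
qed

end

lemma linear_diag_op: "linear (diag_op B g)"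
  unfolding diag_op_def
  by (intro linear_compose_sum) (auto intro!: linearI simp: inner_add_right algebra_simps)

lemma tendsto_diag_op:
  assumes "\<And>b. ((\<lambda>T. g T b) \<longlongrightarrow> h b) F" and "(x \<longlongrightarrow> y) F"
  shows "((\<lambda>T. diag_op B (g T) (x T)) \<longlongrightarrow> diag_op B h y) F"
  unfolding diag_op_def by (intro tendsto_intros assms)

lemma symmetric_matrix_diagonalizable:
  fixes A :: "real^'n^'n"
  assumes sym: "\<And>x y. (A *v x) \<bullet> y = x \<bullet> (A *v y)"
  obtains B where "orthonormal_basis B" "\<And>x. A *v x = diag_op B (\<lambda>b. b \<bullet> (A *v b)) x"
proof -
  obtain B where B: "orthonormal_eigenvectors A B" "card B = CARD('n)"
    using orthonormal_eigenvectors_exist[OF sym order_refl] by blast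
  then interpret orthonormal_basis B by unfold_locales (auto simp: orthonormal_eigenvectors_def)
  have "A *v x = diag_op B (\<lambda>b. b \<bullet> (A *v b)) x" for x
  proof (rule basis_eqI)
    fix b assume b: "b \<in> B"
    have "b \<bullet> (A *v x) = (A *v b) \<bullet> x" by (simp add: sym)
    also have "\<dots> = (b \<bullet> (A *v b)) * (b \<bullet> x)"
      using B(1) b unfolding orthonormal_eigenvectors_def by (metis inner_scaleR_left)
    finally show "b \<bullet> (A *v x) = b \<bullet> diag_op B (\<lambda>b. b \<bullet> (A *v b)) x"
      by (simp add: inner_diag_op_basis b)
  qed
  then show ?thesis using that orthonormal_basis_axioms by blast
qed

section \<open>The scalar reverse ODE\<close>

text \<open>The eigenvalue of \<open>M_\<tau>\<close> along an eigenvector of \<open>S\<close> with eigenvalue \<open>a\<close>.\<close>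

definition diffused_var :: "real \<Rightarrow> real \<Rightarrow> real" where
  "diffused_var a \<tau> = (sigma_sched \<tau>)\<^sup>2 + (r_sched \<tau>)\<^sup>2 * a"

lemma diffused_var_eq: "\<tau> \<ge> 0 \<Longrightarrow> diffused_var a \<tau> = 1 - exp (- 2 * \<tau>) + exp (- 2 * \<tau>) * a"
  by (simp add: diffused_var_def sigma_sched_def r_sched_def power2_eq_square flip: exp_add)

lemma diffused_var_pos: assumes "a > 0" "\<tau> \<ge> 0" shows "diffused_var a \<tau> > 0"
proof -
  have "0 < (1 - exp (- 2 * \<tau>)) + exp (- 2 * \<tau>) * a"
    using assms by (intro add_nonneg_pos) auto
  then show ?thesis using assms by (simp add: diffused_var_eq)
qed

lemma tendsto_diffused_var: "(diffused_var a \<longlongrightarrow> 1) at_top"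
proof -
  have "((\<lambda>\<tau>. 1 - exp (- 2 * \<tau>) + exp (- 2 * \<tau>) * a) \<longlongrightarrow> 1) at_top" by real_asymp
  moreover have "\<forall>\<^sub>F \<tau> in at_top. 1 - exp (- 2 * \<tau>) + exp (- 2 * \<tau>) * a = diffused_var a \<tau>"
    using eventually_ge_at_top[of 0] by eventually_elim (simp add: diffused_var_eq)
  ultimately show ?thesis by (rule Lim_transform_eventually)
qed

text \<open>
  \<open>V' = 2 (V - 1)\<close> and \<open>R' = R\<close> are the equations satisfied by \<open>t \<mapsto> diffused_var a (T - t)\<close>
  and \<open>t \<mapsto> r_sched (T - t)\<close>.
\<close>

lemma ode_first_integral:
  fixes w V R :: "real \<Rightarrow> real"
  assumes V: "V t > 0" and dV: "(V has_real_derivative 2 * (V t - 1)) (at t within S)"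
    and dR: "(R has_real_derivative R t) (at t within S)"
    and dw: "(w has_real_derivative w t - (w t - R t * m) / V t) (at t within S)"
  shows "((\<lambda>t. (w t - R t * m) / sqrt (V t)) has_real_derivative 0) (at t within S)"
proof -
  have "((\<lambda>t. (w t - R t * m) / sqrt (V t)) has_real_derivative
      ((w t - (w t - R t * m) / V t - R t * m) * sqrt (V t)
        - (w t - R t * m) * (inverse (sqrt (V t)) / 2 * (2 * (V t - 1)))) / (sqrt (V t) * sqrt (V t)))
      (at t within S)"
    by (intro DERIV_divide DERIV_diff dw DERIV_cmult_right dR DERIV_chain2[OF DERIV_real_sqrt[OF V] dV])
      (use V in simp)
  moreover have "(w t - (w t - R t * m) / V t - R t * m) * sqrt (V t)
        - (w t - R t * m) * (inverse (sqrt (V t)) / 2 * (2 * (V t - 1))) = 0"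
  proof -
    define s where "s = sqrt (V t)"
    have s: "s > 0" "V t = s * s" using V by (simp_all add: s_def)
    show ?thesis unfolding s_def[symmetric] s(2) using s(1) by (simp add: field_simps)
  qed
  ultimately show ?thesis by (metis div_0)
qed

definition reverse_gain :: "real \<Rightarrow> real \<Rightarrow> real" where
  "reverse_gain a T = sqrt (a / diffused_var a T)"

lemma tendsto_reverse_gain: "(reverse_gain a \<longlongrightarrow> sqrt a) at_top"
  unfolding reverse_gain_def using tendsto_diffused_var[of a]
  by (auto intro!: tendsto_eq_intros)

lemma reverse_ode_scalar_solution:
  fixes w :: "real \<Rightarrow> real"
  assumes T: "T > 0" and a: "a > 0"
    and dw: "\<And>t. t \<in> {0..T} \<Longrightarrow> (w has_real_derivative
       w t - (w t - r_sched (T - t) * m) / diffused_var a (T - t)) (at t within {0..T})"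
  shows "w T = m + reverse_gain a T * (w 0 - r_sched T * m)"
proof -
  define V where "V t = 1 - exp (- 2 * (T - t)) + exp (- 2 * (T - t)) * a" for t
  have V_eq: "V t = diffused_var a (T - t)" if "t \<in> {0..T}" for t
    using that by (simp add: V_def diffused_var_eq)
  define Q where "Q t = (w t - r_sched (T - t) * m) / sqrt (V t)" for t
  have "(Q has_real_derivative 0) (at t within {0..T})" if t: "t \<in> {0..T}" for t
    unfolding Q_def
  proof (rule ode_first_integral)
    show "V t > 0" using t a by (simp add: V_eq diffused_var_pos)
    show "(V has_real_derivative 2 * (V t - 1)) (at t within {0..T})"
      unfolding V_def by (auto intro!: derivative_eq_intros simp: algebra_simps)
    show "((\<lambda>t. r_sched (T - t)) has_real_derivative r_sched (T - t)) (at t within {0..T})"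
      unfolding r_sched_def by (auto intro!: derivative_eq_intros)
    show "(w has_real_derivative w t - (w t - r_sched (T - t) * m) / V t) (at t within {0..T})"
      using dw[OF t] by (simp add: V_eq[OF t])
  qed
  then obtain C where "\<And>t. t \<in> {0..T} \<Longrightarrow> Q t = C"
    using has_field_derivative_zero_constant[of "{0..T}" Q] by auto
  then have "Q T = Q 0" using T by simp
  moreover have "V T = a" "V 0 = diffused_var a T" using T by (simp_all add: V_def diffused_var_eq)
  moreover have "diffused_var a T > 0" using a T by (simp add: diffused_var_pos)
  ultimately show ?thesis using a
    by (simp add: Q_def reverse_gain_def r_sched_def real_sqrt_divide field_simps)
qed

lemma outer_mult_vector: "outer x y *v v = (y \<bullet> v) *\<^sub>R x"
  by (simp add: outer_def vec_eq_iff matrix_vector_mult_def inner_vec_def sum_distrib_left mult_ac)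

lemma sum_matrix_vector_mult: "(\<Sum>i\<in>I. A i) *v v = (\<Sum>i\<in>I. A i *v v)"
  by (induction I rule: infinite_finite_induct) (auto simp: matrix_vector_mult_add_rdistrib)

lemma emp_cov_mult_vector: "emp_cov n xs *v v =
   (1 / real n) *\<^sub>R (\<Sum>i<n. (xs i \<bullet> v) *\<^sub>R xs i) - (emp_mean n xs \<bullet> v) *\<^sub>R emp_mean n xs"
  unfolding emp_cov_def
  by (simp add: matrix_vector_mult_diff_rdistrib sum_matrix_vector_mult outer_mult_vector
      flip: scaleR_matrix_vector_assoc)

lemma emp_cov_symmetric: "(emp_cov n xs *v x) \<bullet> y = x \<bullet> (emp_cov n xs *v y)"
  by (simp add: emp_cov_mult_vector inner_diff_left inner_diff_right inner_sum_left inner_sum_right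
      inner_commute mult.commute)

lemma emp_cov_psd: "x \<bullet> (emp_cov n xs *v x) \<ge> 0"
proof -
  have "x \<bullet> (emp_cov n xs *v x)
      = ((\<Sum>i<n. (xs i \<bullet> x)\<^sup>2) * real n - (\<Sum>i<n. xs i \<bullet> x)\<^sup>2) / (real n)\<^sup>2"
    by (cases "n = 0")
      (simp_all add: emp_cov_mult_vector emp_mean_def inner_diff_right inner_sum_right inner_sum_left
        inner_commute power2_eq_square field_simps)
  also have "\<dots> \<ge> 0"
    using sum_squared_le_sum_of_squares[of "\<lambda>i. xs i \<bullet> x" "{..<n}"] by simp
  finally show ?thesis .
qed

lemma emp_cov_shift_posdef:
  fixes xs :: "nat \<Rightarrow> real^'n"
  assumes "c > 0 \<or> rank (emp_cov n xs) = CARD('n)" and "c \<ge> 0" and "x \<noteq> 0"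
  shows "x \<bullet> ((emp_cov n xs + c *\<^sub>R mat 1) *v x) > 0"
proof -
  have "x \<bullet> ((emp_cov n xs + c *\<^sub>R mat 1) *v x) = x \<bullet> (emp_cov n xs *v x) + c * (x \<bullet> x)"
    by (simp add: matrix_vector_mult_add_rdistrib inner_add_right flip: scaleR_matrix_vector_assoc)
  moreover have "c * (x \<bullet> x) > 0 \<or> x \<bullet> (emp_cov n xs *v x) > 0"
    using assms(1)
  proof
    assume "rank (emp_cov n xs) = CARD('n)"
    then have "inj ((*v) (emp_cov n xs))" by (simp add: full_rank_injective)
    then have "emp_cov n xs *v x \<noteq> emp_cov n xs *v 0" using \<open>x \<noteq> 0\<close> by (meson injD)
    then have "emp_cov n xs *v x \<noteq> 0" by simp
    then have "x \<bullet> (emp_cov n xs *v x) \<noteq> 0"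
      using psd_quadratic_form_zero_imp_zero[OF emp_cov_symmetric emp_cov_psd] by blast
    with emp_cov_psd[of x n xs] show ?thesis by simp
  qed (use \<open>x \<noteq> 0\<close> in simp)
  ultimately show ?thesis using emp_cov_psd[of x n xs] \<open>c \<ge> 0\<close>
    by (auto intro: add_pos_nonneg add_nonneg_pos)
qed

section \<open>The reverse flow in an eigenbasis\<close>

definition reverse_flow_map ::
    "(real^'n) set \<Rightarrow> (real^'n \<Rightarrow> real) \<Rightarrow> real^'n \<Rightarrow> real \<Rightarrow> real^'n \<Rightarrow> real^'n" where
  "reverse_flow_map B lam m T x = diag_op B (\<lambda>b. reverse_gain (lam b) T) (x - r_sched T *\<^sub>R m) + m"

lemma tendsto_reverse_flow_map:
  "((\<lambda>T. reverse_flow_map B lam m T x) \<longlongrightarrow> diag_op B (\<lambda>b. sqrt (lam b)) x + m) at_top"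
proof -
  have "(r_sched \<longlongrightarrow> 0) at_top" unfolding r_sched_def by real_asymp
  then show ?thesis
    unfolding reverse_flow_map_def by (auto intro!: tendsto_eq_intros tendsto_diag_op tendsto_reverse_gain)
qed

lemma borel_measurable_reverse_flow_map: "reverse_flow_map B lam m T \<in> borel_measurable borel"
  unfolding reverse_flow_map_def diag_op_def by (intro borel_measurable_continuous_onI continuous_intros)

context orthonormal_basis begin

lemma noise_cov_diag_op:
  assumes S: "\<And>x. S *v x = diag_op B lam x"
  shows "((sigma_sched \<tau>)\<^sup>2 *\<^sub>R mat 1 + (r_sched \<tau>)\<^sup>2 *\<^sub>R S) *v x
    = diag_op B (\<lambda>b. diffused_var (lam b) \<tau>) x"
  by (rule basis_eqI)
    (simp add: matrix_vector_mult_add_rdistrib inner_add_right S inner_diag_op_basis diffused_var_def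
      algebra_simps flip: scaleR_matrix_vector_assoc)

lemma matrix_inv_noise_cov:
  assumes S: "\<And>x. S *v x = diag_op B lam x" and pos: "\<And>b. b \<in> B \<Longrightarrow> lam b > 0" and "\<tau> \<ge> 0"
  shows "matrix_inv ((sigma_sched \<tau>)\<^sup>2 *\<^sub>R mat 1 + (r_sched \<tau>)\<^sup>2 *\<^sub>R S) *v x
    = diag_op B (\<lambda>b. 1 / diffused_var (lam b) \<tau>) x"
  by (rule matrix_inv_diag_op[OF noise_cov_diag_op[OF S]])
    (use pos diffused_var_pos \<open>\<tau> \<ge> 0\<close> in \<open>fastforce\<close>)

lemma reverse_ode_solution:
  fixes y :: "real \<Rightarrow> real^'n"
  assumes T: "T > 0" and pos: "\<And>b. b \<in> B \<Longrightarrow> lam b > 0"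
    and dy: "\<And>t. t \<in> {0..T} \<Longrightarrow> (y has_vector_derivative
       y t - diag_op B (\<lambda>b. 1 / diffused_var (lam b) (T - t)) (y t - r_sched (T - t) *\<^sub>R m))
       (at t within {0..T})"
  shows "y T = reverse_flow_map B lam m T (y 0)"
  unfolding reverse_flow_map_def
proof (rule basis_eqI)
  fix b assume b: "b \<in> B"
  have "b \<bullet> y T = b \<bullet> m + reverse_gain (lam b) T * (b \<bullet> y 0 - r_sched T * (b \<bullet> m))"
  proof (rule reverse_ode_scalar_solution[OF T pos[OF b]])
    fix t assume t: "t \<in> {0..T}"
    from bounded_linear.has_vector_derivative[OF bounded_linear_inner_right dy[OF t], of b]
    show "((\<lambda>t. b \<bullet> y t) has_real_derivative b \<bullet> y t
        - (b \<bullet> y t - r_sched (T - t) * (b \<bullet> m)) / diffused_var (lam b) (T - t)) (at t within {0..T})"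
      by (simp add: has_real_derivative_iff_has_vector_derivative inner_diff_right inner_diag_op_basis b)
  qed
  then show "b \<bullet> y T = b \<bullet> (diag_op B (\<lambda>b. reverse_gain (lam b) T) (y 0 - r_sched T *\<^sub>R m) + m)"
    by (simp add: inner_add_right inner_diff_right inner_diag_op_basis b)
qed

end

section \<open>Gaussian images and weak convergence\<close>

lemma borel_measurable_linear: "linear (L :: real^'n \<Rightarrow> real^'m) \<Longrightarrow> L \<in> borel_measurable borel"
  by (intro borel_measurable_continuous_onI linear_continuous_on) (simp add: linear_conv_bounded_linear)

lemma is_gaussian_affine_image:
  fixes L :: "real^'n \<Rightarrow> real^'m" and L' :: "real^'m \<Rightarrow> real^'n" and z0 :: "'a \<Rightarrow> real^'n"
  assumes P: "prob_space M" and z0_rv: "z0 \<in> borel_measurable M"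
    and z0_std: "is_gaussian (distr M borel z0) 0 (mat 1)"
    and L: "linear L" and adjoint: "\<And>x u. u \<bullet> L x = L' u \<bullet> x"
    and cov: "\<And>u. u \<bullet> (C *v u) = L' u \<bullet> L' u"
  shows "is_gaussian (distr M borel (\<lambda>\<omega>. L (z0 \<omega>) + b)) b C"
proof -
  have Z: "(\<lambda>\<omega>. L (z0 \<omega>) + b) \<in> borel_measurable M"
    using measurable_compose[OF z0_rv borel_measurable_linear[OF L]] by measurable
  have cis: "(\<lambda>x. cis (u \<bullet> x)) \<in> borel_measurable borel" for u :: "real^'k"
    by (rule borel_measurable_continuous_onI) (auto intro!: continuous_intros simp: cis_conv_exp)
  have "(CLINT x|distr M borel (\<lambda>\<omega>. L (z0 \<omega>) + b). cis (u \<bullet> x))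
     = cis (u \<bullet> b) * complex_of_real (exp (- (u \<bullet> (C *v u)) / 2))" for u
  proof -
    have "(CLINT x|distr M borel (\<lambda>\<omega>. L (z0 \<omega>) + b). cis (u \<bullet> x))
        = (CLINT \<omega>|M. cis (u \<bullet> (L (z0 \<omega>) + b)))"
      by (rule integral_distr[OF Z cis])
    also have "\<dots> = (CLINT \<omega>|M. cis (u \<bullet> b) * cis (L' u \<bullet> z0 \<omega>))"
      by (simp add: inner_add_right adjoint add.commute flip: cis_mult)
    also have "\<dots> = cis (u \<bullet> b) * (CLINT x|distr M borel z0. cis (L' u \<bullet> x))"
      by (simp add: integral_distr[OF z0_rv cis])
    also have "\<dots> = cis (u \<bullet> b) * complex_of_real (exp (- (u \<bullet> (C *v u)) / 2))"
      using z0_std by (simp add: is_gaussian_def cov)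
    finally show ?thesis .
  qed
  moreover have "prob_space (distr M borel (\<lambda>\<omega>. L (z0 \<omega>) + b))"
    by (rule prob_space.prob_space_distr[OF P Z])
  ultimately show ?thesis unfolding is_gaussian_def by simp
qed

lemma (in orthonormal_basis) is_gaussian_diag_op_image:
  assumes "prob_space M" and "z0 \<in> borel_measurable M"
    and "is_gaussian (distr M borel z0) 0 (mat 1)"
    and C: "\<And>u. C *v u = diag_op B (\<lambda>b. (h b)\<^sup>2) u"
  shows "is_gaussian (distr M borel (\<lambda>\<omega>. diag_op B h (z0 \<omega>) + v)) v C"
  using assms(1-3) linear_diag_op
proof (rule is_gaussian_affine_image)
  show "u \<bullet> diag_op B h x = diag_op B h u \<bullet> x" for u x by (simp add: diag_op_self_adjoint)
  show "u \<bullet> (C *v u) = diag_op B h u \<bullet> diag_op B h u" for u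
    by (simp add: C diag_op_self_adjoint diag_op_diag_op power2_eq_square)
qed

lemma (in orthonormal_basis) gaussian_reverse_flow_map:
  assumes "prob_space M" and "z0 \<in> borel_measurable M"
    and "is_gaussian (distr M borel z0) 0 (mat 1)"
  shows "gaussian (distr M borel (\<lambda>\<omega>. reverse_flow_map B lam m T (z0 \<omega>)))"
proof -
  let ?g = "\<lambda>b. reverse_gain (lam b) T"
  have "(\<lambda>\<omega>. reverse_flow_map B lam m T (z0 \<omega>))
      = (\<lambda>\<omega>. diag_op B ?g (z0 \<omega>) + (m - diag_op B ?g (r_sched T *\<^sub>R m)))"
    by (simp add: reverse_flow_map_def linear_diff[OF linear_diag_op] algebra_simps)
  moreover have "is_gaussian
      (distr M borel (\<lambda>\<omega>. diag_op B ?g (z0 \<omega>) + (m - diag_op B ?g (r_sched T *\<^sub>R m))))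
      (m - diag_op B ?g (r_sched T *\<^sub>R m)) (matrix (diag_op B (\<lambda>b. (?g b)\<^sup>2)))"
    by (rule is_gaussian_diag_op_image[OF assms])
      (simp add: matrix_works[OF linear_diag_op[folded linear_matrix_vector_mul_eq]])
  ultimately show ?thesis unfolding gaussian_def by auto
qed

lemma weak_conv_at_top_distr_tendsto:
  fixes X :: "real \<Rightarrow> 'a \<Rightarrow> real^'n"
  assumes P: "prob_space M" and X: "\<And>T. X T \<in> borel_measurable M" and Y: "Y \<in> borel_measurable M"
    and lim: "\<And>\<omega>. \<omega> \<in> space M \<Longrightarrow> ((\<lambda>T. X T \<omega>) \<longlongrightarrow> Y \<omega>) at_top"
  shows "weak_conv_at_top (\<lambda>T. distr M borel (X T)) (distr M borel Y)"
  unfolding weak_conv_at_top_def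
proof (intro allI impI, elim conjE)
  interpret prob_space M by (rule P)
  fix f :: "real^'n \<Rightarrow> real"
  assume f_cont: "continuous_on UNIV f" and "bounded (range f)"
  then obtain K where K: "\<And>x. norm (f x) \<le> K" unfolding bounded_iff by auto
  have f: "f \<in> borel_measurable borel" by (rule borel_measurable_continuous_onI[OF f_cont])
  have "((\<lambda>T. LINT \<omega>|M. f (X T \<omega>)) \<longlongrightarrow> (LINT \<omega>|M. f (Y \<omega>))) at_top"
  proof (rule integral_dominated_convergence_at_top[where w="\<lambda>_. K"])
    show "AE \<omega> in M. ((\<lambda>T. f (X T \<omega>)) \<longlongrightarrow> f (Y \<omega>)) at_top"
      using f_cont lim by (intro AE_I2 isCont_tendsto_compose[of _ f])
        (auto simp: continuous_on_eq_continuous_at)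
  qed (use K measurable_compose[OF X f] measurable_compose[OF Y f] in auto)
  then show "((\<lambda>T. integral\<^sup>L (distr M borel (X T)) f) \<longlongrightarrow> integral\<^sup>L (distr M borel Y) f) at_top"
    by (simp add: integral_distr[OF X f] integral_distr[OF Y f])
qed

lemma weak_conv_at_top_cong:
  fixes F F' :: "real \<Rightarrow> (real^'n) measure"
  assumes "weak_conv_at_top F G" and eq: "\<forall>\<^sub>F T in at_top. F T = F' T"
  shows "weak_conv_at_top F' G"
  unfolding weak_conv_at_top_def
proof (intro allI impI)
  fix f :: "real^'n \<Rightarrow> real"
  assume "continuous_on UNIV f \<and> bounded (range f)"
  with \<open>weak_conv_at_top F G\<close> have "((\<lambda>T. integral\<^sup>L (F T) f) \<longlongrightarrow> integral\<^sup>L G f) at_top"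
    unfolding weak_conv_at_top_def by blast
  moreover have "\<forall>\<^sub>F T in at_top. integral\<^sup>L (F T) f = integral\<^sup>L (F' T) f"
    using eq by eventually_elim simp
  ultimately show "((\<lambda>T. integral\<^sup>L (F' T) f) \<longlongrightarrow> integral\<^sup>L G f) at_top"
    by (rule Lim_transform_eventually)
qed

theorem reverse_flow_gaussian_target:
  fixes S :: "real^'d^'d" and m :: "real^'d" and M :: "'a measure" and z0 :: "'a \<Rightarrow> real^'d"
    and z :: "real \<Rightarrow> real \<Rightarrow> 'a \<Rightarrow> real^'d"
  defines "Mt \<equiv> (\<lambda>\<tau>. (sigma_sched \<tau>)\<^sup>2 *\<^sub>R mat 1 + (r_sched \<tau>)\<^sup>2 *\<^sub>R S)"
  assumes sym: "\<And>x y. (S *v x) \<bullet> y = x \<bullet> (S *v y)"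
    and posdef: "\<And>x. x \<noteq> 0 \<Longrightarrow> x \<bullet> (S *v x) > 0"
    and P: "prob_space M" and z0_rv: "z0 \<in> borel_measurable M"
    and z0_std: "is_gaussian (distr M borel z0) 0 (mat 1)"
    and init: "\<And>T \<omega>. T > 0 \<Longrightarrow> \<omega> \<in> space M \<Longrightarrow> z T 0 \<omega> = z0 \<omega>"
    and ode: "\<And>T \<omega> t. T > 0 \<Longrightarrow> \<omega> \<in> space M \<Longrightarrow> t \<in> {0..T} \<Longrightarrow>
       ((\<lambda>s. z T s \<omega>) has_vector_derivative
          z T t \<omega> - matrix_inv (Mt (T - t)) *v (z T t \<omega> - r_sched (T - t) *\<^sub>R m))
         (at t within {0..T})"
  shows "(\<forall>T>0. gaussian (distr M borel (z T T)))
    \<and> (\<exists>G. is_gaussian G m S \<and> weak_conv_at_top (\<lambda>T. distr M borel (z T T)) G)"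
proof -
  define lam where "lam b = b \<bullet> (S *v b)" for b
  obtain B where "orthonormal_basis B" and S_diag: "\<And>x. S *v x = diag_op B lam x"
    using symmetric_matrix_diagonalizable[OF sym] unfolding lam_def by blast
  interpret orthonormal_basis B by fact
  have lam_pos: "lam b > 0" if "b \<in> B" for b
  proof -
    have "b \<noteq> 0" using unit[OF that] by auto
    then show ?thesis unfolding lam_def by (rule posdef)
  qed
  have lam_nonneg: "lam b \<ge> 0" for b
    using posdef[of b] unfolding lam_def by (cases "b = 0") auto
  let ?F = "reverse_flow_map B lam m"
  have distr_eq: "distr M borel (\<lambda>\<omega>. ?F T (z0 \<omega>)) = distr M borel (z T T)" if "T > 0" for T
  proof (rule distr_cong)
    show "?F T (z0 \<omega>) = z T T \<omega>" if "\<omega> \<in> space M" for \<omega>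
      using reverse_ode_solution[OF \<open>T > 0\<close> lam_pos, where y="\<lambda>t. z T t \<omega>" and m=m]
        ode[OF \<open>T > 0\<close> that] matrix_inv_noise_cov[OF S_diag lam_pos] init[OF \<open>T > 0\<close> that]
      unfolding Mt_def by simp
  qed simp_all
  define G where "G = distr M borel (\<lambda>\<omega>. diag_op B (\<lambda>b. sqrt (lam b)) (z0 \<omega>) + m)"
  have "weak_conv_at_top (\<lambda>T. distr M borel (\<lambda>\<omega>. ?F T (z0 \<omega>))) G"
    unfolding G_def
  proof (rule weak_conv_at_top_distr_tendsto[OF P])
    show "(\<lambda>\<omega>. ?F T (z0 \<omega>)) \<in> borel_measurable M" for T
      by (rule measurable_compose[OF z0_rv borel_measurable_reverse_flow_map])
    show "(\<lambda>\<omega>. diag_op B (\<lambda>b. sqrt (lam b)) (z0 \<omega>) + m) \<in> borel_measurable M"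
      using z0_rv by (simp add: diag_op_def)
  qed (rule tendsto_reverse_flow_map)
  moreover have "\<forall>\<^sub>F T in at_top. distr M borel (\<lambda>\<omega>. ?F T (z0 \<omega>)) = distr M borel (z T T)"
    using eventually_gt_at_top[of 0] by eventually_elim (rule distr_eq)
  ultimately have "weak_conv_at_top (\<lambda>T. distr M borel (z T T)) G"
    by (rule weak_conv_at_top_cong)
  moreover have "is_gaussian G m S"
    unfolding G_def by (rule is_gaussian_diag_op_image[OF P z0_rv z0_std]) (simp add: S_diag lam_nonneg)
  moreover have "\<forall>T>0. gaussian (distr M borel (z T T))"
    using gaussian_reverse_flow_map[OF P z0_rv z0_std] distr_eq by metis
  ultimately show ?thesis by blast
qed

theorem mainTheorem4:
  fixes n :: nat and xs :: "nat \<Rightarrow> real^'d" and \<gamma> :: real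
    and M :: "'a measure" and z0 :: "'a \<Rightarrow> real^'d"
    and z :: "real \<Rightarrow> real \<Rightarrow> 'a \<Rightarrow> real^'d"
  defines "\<mu> \<equiv> emp_mean n xs"
    and "\<Sigma> \<equiv> emp_cov n xs"
    and "c \<equiv> \<gamma>\<^sup>2 / (1 + \<gamma>\<^sup>2) * (norm (emp_mean n xs))\<^sup>2"
  defines "Mt \<equiv> (\<lambda>\<tau>. (sigma_sched \<tau>)\<^sup>2 *\<^sub>R mat 1 + (r_sched \<tau>)\<^sup>2 *\<^sub>R (\<Sigma> + c *\<^sub>R mat 1))"
  assumes n_pos: "n > 0"
    and gamma_nonneg: "\<gamma> \<ge> 0"
    and nondeg: "\<gamma> *\<^sub>R \<mu> \<noteq> 0 \<or> rank \<Sigma> = CARD('d)"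
    and P: "prob_space M"
    and z0_rv: "z0 \<in> borel_measurable M"
    and z0_std: "is_gaussian (distr M borel z0) 0 (mat 1)"
    and init: "\<And>T \<omega>. T > 0 \<Longrightarrow> \<omega> \<in> space M \<Longrightarrow> z T 0 \<omega> = z0 \<omega>"
    and ode: "\<And>T \<omega> t. T > 0 \<Longrightarrow> \<omega> \<in> space M \<Longrightarrow> t \<in> {0..T} \<Longrightarrow>
       ((\<lambda>s. z T s \<omega>) has_vector_derivative
          (z T t \<omega> - matrix_inv (Mt (T - t)) *v z T t \<omega>
           + (r_sched (T - t) / (1 + \<gamma>\<^sup>2)) *\<^sub>R (matrix_inv (Mt (T - t)) *v \<mu>)))
         (at t within {0..T})"
  shows "(\<forall>T>0. gaussian (distr M borel (z T T)))
    \<and> (\<exists>G. is_gaussian G ((1 / (1 + \<gamma>\<^sup>2)) *\<^sub>R \<mu>) (\<Sigma> + c *\<^sub>R mat 1)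
           \<and> weak_conv_at_top (\<lambda>T. distr M borel (z T T)) G)"
proof -
  define S where "S = \<Sigma> + c *\<^sub>R mat 1"
  have sym: "(S *v x) \<bullet> y = x \<bullet> (S *v y)" for x y
    by (simp add: S_def \<Sigma>_def matrix_vector_mult_add_rdistrib emp_cov_symmetric inner_add_left
        inner_add_right flip: scaleR_matrix_vector_assoc)
  have "c > 0 \<or> rank \<Sigma> = CARD('d)"
    using nondeg by (auto simp: c_def \<mu>_def add_pos_nonneg)
  then have posdef: "x \<bullet> (S *v x) > 0" if "x \<noteq> 0" for x
    unfolding S_def \<Sigma>_def by (rule emp_cov_shift_posdef[OF _ _ that]) (simp_all add: \<Sigma>_def c_def)
  have "((\<lambda>s. z T s \<omega>) has_vector_derivative z T t \<omega>
      - matrix_inv ((sigma_sched (T - t))\<^sup>2 *\<^sub>R mat 1 + (r_sched (T - t))\<^sup>2 *\<^sub>R S)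
        *v (z T t \<omega> - r_sched (T - t) *\<^sub>R (1 / (1 + \<gamma>\<^sup>2)) *\<^sub>R \<mu>)) (at t within {0..T})"
    if "T > 0" "\<omega> \<in> space M" "t \<in> {0..T}" for T \<omega> t
    using ode[OF that] unfolding Mt_def S_def
    by (simp add: matrix_vector_mult_diff_distrib matrix_vector_mult_scaleR algebra_simps)
  from reverse_flow_gaussian_target[OF sym posdef P z0_rv z0_std init this] show ?thesis
    unfolding S_def .
qed

end
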